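(* (Intuitionistic modal logic.) For all propositions $A,B,C$: (MP) $\vdash^H_{\mathbf{CPL}} A\supset B$ and $\vdash^H_{\mathbf{CPL}} A$ imply $\vdash^H_{\mathbf{CPL}} B$; and $\vdash^H_{\mathbf{CPL*}} A\supset B$ and $\vdash^H_{\mathbf{CPL*}} A$ imply $\vdash^H_{\mathbf{CPL*}} B$. (I) $A\supset A$; (K) $A\supset B\supset A$; (S) $(A\supset B\supset C)\supset(A\supset B)\supset A\supset C$; ($\bot E$) $\bot\supset A$ — each of these holds under both $\vdash^H_{\mathbf{CPL}}$ and $\vdash^H_{\mathbf{CPL*}}$. (NEC) $\vdash^H_{\mathbf{CPL}} A$ implies $\vdash^H_{\mathbf{CPL}}\Box A$, and $\vdash^H_{\mathbf{CPL*}} A$ implies $\vdash^H_{\mathbf{CPL*}}\Box A$. ($K\Box$) $\Box(A\supset B)\supset\Box A\supset\Box B$ and ($K\Diamond$) $\Box(A\supset B)\supset\Diamond A\supset\Diamond B$ hold under both $\vdash^H_{\mathbf{CPL}}$ and $\vdash^H_{\mathbf{CPL*}}$. ($4\Box$) $\Box A\supset\Box\Box A$ holds under both $\vdash^H_{\mathbf{CPL}}$ and $\vdash^H_{\mathbf{CPL*}}$ when only transitive accessibility relations are considered. ($\Diamond\bot$) $\vdash^H_{\mathbf{CPL*}}\neg\Diamond\bot$. ($4\Diamond$) $\Diamond\Diamond A\supset\Diamond A$ holds under $\vdash^H_{\mathbf{CPL*}}$ when only transitive accessibility relations are considered. Moreover, $\neg\Diamond\bot$ is not an axiom of CPL, and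 $(\Diamond A\supset\Box B)\supset\Box(A\supset B)$ is an axiom of neither CPL nor CPL*.
   Context: A set $W$ of worlds with a binary accessibility relation $\prec$ is converse well-founded if there is no infinite chain $w_0\prec w_1\prec\cdots$; $\prec^*$ denotes its reflexive–transitive closure. Propositions: $A,B,C ::= Q\mid\bot\mid A\supset B\mid\Diamond A\mid\Box A$ ($Q$ atomic); $\neg A$ abbreviates $A\supset\bot$, and $\supset$ associates to the right. A context $\Gamma$ is a finite collection of judgments $A[w]$. Given such $(W,\prec)$, $\Gamma\vdash_{\mathbf{CPL}}A[w]$ is defined one world at a time (provability at $w$ after provability at all worlds reachable from $w$ by one or more $\prec$-steps) as the least relation closed under: (hyp) $\Gamma,A[w]\vdash A[w]$; ($\bot E$) $\Gamma\vdash\bot[w]$ implies $\Gamma\vdash C[w]$; ($\supset I$) $\Gamma,A[w]\vdash B[w]$ implies $\Gamma\vdash A\supset B[w]$; ($\supset E$) $\Gamma\vdash A\supset B[w]$ and $\Gamma\vdash A[w]$ imply $\Gamma\vdash B[w]$; ($\Diamond I$) $w\prec w'$ and $\Gamma\vdash A[w']$ imply $\Gamma\vdash\Diamond A[w]$; ($\Box I$) if $\Gamma\vdash A[w']$ for all $w'$ with $w\prec w'$ then $\Gamma\vdash\Box A[w]$; ($\Diamond E$) if $\Gamma\vdash\Diamond A[w]$ and for all $w'$ with $w\prec w'$, $\Gamma\vdash A[w']$ implies $\Gamma\vdash C[w]$, then $\Gamma\vdash C[w]$; ($\Box E$) if $\Gamma\vdash\Box A[w]$ and ($\Gamma\vdash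 A[w']$ for all $w'$ with $w\prec w'$) implies $\Gamma\vdash C[w]$, then $\Gamma\vdash C[w]$. $\Gamma\vdash_{\mathbf{CPL*}}A[w]$ is defined identically except that: ($\bot E$) $w'\prec^* w$ and $\Gamma\vdash\bot[w]$ imply $\Gamma\vdash C[w']$; ($\Diamond E$) if $w''\prec^* w$, $\Gamma\vdash\Diamond A[w]$, and for all $w'$ with $w\prec w'$, $\Gamma\vdash A[w']$ implies $\Gamma\vdash C[w'']$, then $\Gamma\vdash C[w'']$; ($\Box E$) if $w''\prec^* w$, $\Gamma\vdash\Box A[w]$, and ($\Gamma\vdash A[w']$ for all $w'$ with $w\prec w'$) implies $\Gamma\vdash C[w'']$, then $\Gamma\vdash C[w'']$. $\vdash^H_{\mathbf{CPL}}A$ means: for every converse well-founded $(W,\prec)$, every $w\in W$ and every context $\Gamma$, $\Gamma\vdash_{\mathbf{CPL}}A[w]$; likewise $\vdash^H_{\mathbf{CPL*}}A$ with $\vdash_{\mathbf{CPL*}}$. "Holds when only transitive accessibility relations are considered" means the same quantification restricted to transitive $\prec$. A schema is "not an axiom" of CPL (resp. CPL* ) if there exist a converse well-founded $(W,\prec)$, a world $w$, a context $\Gamma$, and an instance $A$ of the schema with $\Gamma\nvdash_{\mathbf{CPL}}A[w]$ (resp. $\Gamma\nvdash_{\mathbf{CPL*}}A[w]$). *)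

theory Defs
  imports Main
begin

datatype 'q fm = Atom 'q | Bot | Imp "'q fm" "'q fm" | Dia "'q fm" | Box "'q fm"

definition Neg :: "'q fm \<Rightarrow> 'q fm" where
  "Neg A = Imp A Bot"

text \<open>A context is a finite collection of judgments A[w]; finiteness is imposed
  where contexts are quantified.\<close>
type_synonym ('q, 'w) ctx = "('q fm \<times> 'w) set"

definition cwf :: "('w \<Rightarrow> 'w \<Rightarrow> bool) \<Rightarrow> bool" where
  "cwf R \<longleftrightarrow> \<not> (\<exists>f :: nat \<Rightarrow> 'w. \<forall>n. R (f n) (f (Suc n)))"

text \<open>cpl_at R S w is the least relation (over all contexts and propositions) at world w
  closed under the CPL rules, where S gives provability at the other (strictly
  reachable) worlds, assumed already defined.\<close>
inductive cpl_at :: "('w \<Rightarrow> 'w \<Rightarrow> bool) \<Rightarrow> ('w \<Rightarrow> ('q, 'w) ctx \<Rightarrow> 'q fm \<Rightarrow> bool)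
                      \<Rightarrow> 'w \<Rightarrow> ('q, 'w) ctx \<Rightarrow> 'q fm \<Rightarrow> bool"
  for R S w where
  hyp: "(A, w) \<in> \<Gamma> \<Longrightarrow> cpl_at R S w \<Gamma> A"
| botE: "cpl_at R S w \<Gamma> Bot \<Longrightarrow> cpl_at R S w \<Gamma> C"
| impI: "cpl_at R S w (insert (A, w) \<Gamma>) B \<Longrightarrow> cpl_at R S w \<Gamma> (Imp A B)"
| impE: "cpl_at R S w \<Gamma> (Imp A B) \<Longrightarrow> cpl_at R S w \<Gamma> A \<Longrightarrow> cpl_at R S w \<Gamma> B"
| diaI: "R w w' \<Longrightarrow> S w' \<Gamma> A \<Longrightarrow> cpl_at R S w \<Gamma> (Dia A)"
| boxI: "(\<forall>w'. R w w' \<longrightarrow> S w' \<Gamma> A) \<Longrightarrow> cpl_at R S w \<Gamma> (Box A)"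
| diaE: "cpl_at R S w \<Gamma> (Dia A) \<Longrightarrow>
         (\<forall>w'. R w w' \<longrightarrow> S w' \<Gamma> A \<longrightarrow> cpl_at R S w \<Gamma> C) \<Longrightarrow> cpl_at R S w \<Gamma> C"
| boxE: "cpl_at R S w \<Gamma> (Box A) \<Longrightarrow>
         ((\<forall>w'. R w w' \<longrightarrow> S w' \<Gamma> A) \<longrightarrow> cpl_at R S w \<Gamma> C) \<Longrightarrow> cpl_at R S w \<Gamma> C"

text \<open>CPL*: the elimination rules may use a judgment at any world v with w R* v.
  If v = w this is the relation being defined at level w; otherwise v is strictly
  reachable from w and provability there is given by S.\<close>
inductive cpls_at :: "('w \<Rightarrow> 'w \<Rightarrow> bool) \<Rightarrow> ('w \<Rightarrow> ('q, 'w) ctx \<Rightarrow> 'q fm \<Rightarrow> bool)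
                      \<Rightarrow> 'w \<Rightarrow> ('q, 'w) ctx \<Rightarrow> 'q fm \<Rightarrow> bool"
  for R S w where
  hyp: "(A, w) \<in> \<Gamma> \<Longrightarrow> cpls_at R S w \<Gamma> A"
| botE: "R\<^sup>*\<^sup>* w v \<Longrightarrow>
         (v = w \<longrightarrow> cpls_at R S w \<Gamma> Bot) \<Longrightarrow> (v \<noteq> w \<longrightarrow> S v \<Gamma> Bot) \<Longrightarrow>
         cpls_at R S w \<Gamma> C"
| impI: "cpls_at R S w (insert (A, w) \<Gamma>) B \<Longrightarrow> cpls_at R S w \<Gamma> (Imp A B)"
| impE: "cpls_at R S w \<Gamma> (Imp A B) \<Longrightarrow> cpls_at R S w \<Gamma> A \<Longrightarrow> cpls_at R S w \<Gamma> B"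
| diaI: "R w w' \<Longrightarrow> S w' \<Gamma> A \<Longrightarrow> cpls_at R S w \<Gamma> (Dia A)"
| boxI: "(\<forall>w'. R w w' \<longrightarrow> S w' \<Gamma> A) \<Longrightarrow> cpls_at R S w \<Gamma> (Box A)"
| diaE: "R\<^sup>*\<^sup>* w v \<Longrightarrow>
         (v = w \<longrightarrow> cpls_at R S w \<Gamma> (Dia A)) \<Longrightarrow> (v \<noteq> w \<longrightarrow> S v \<Gamma> (Dia A)) \<Longrightarrow>
         (\<forall>w'. R v w' \<longrightarrow> S w' \<Gamma> A \<longrightarrow> cpls_at R S w \<Gamma> C) \<Longrightarrow> cpls_at R S w \<Gamma> C"
| boxE: "R\<^sup>*\<^sup>* w v \<Longrightarrow>
         (v = w \<longrightarrow> cpls_at R S w \<Gamma> (Box A)) \<Longrightarrow> (v \<noteq> w \<longrightarrow> S v \<Gamma> (Box A)) \<Longrightarrow>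
         ((\<forall>w'. R v w' \<longrightarrow> S w' \<Gamma> A) \<longrightarrow> cpls_at R S w \<Gamma> C) \<Longrightarrow> cpls_at R S w \<Gamma> C"

text \<open>For converse well-founded R there is exactly one family P with P w = cpl_at R P w
  for all w (recursion along R; level w only consults P at strictly reachable worlds).\<close>
definition CPL :: "('w \<Rightarrow> 'w \<Rightarrow> bool) \<Rightarrow> ('q, 'w) ctx \<Rightarrow> 'q fm \<Rightarrow> 'w \<Rightarrow> bool" where
  "CPL R \<Gamma> A w = (THE P. \<forall>v. P v = cpl_at R P v) w \<Gamma> A"

definition CPLs :: "('w \<Rightarrow> 'w \<Rightarrow> bool) \<Rightarrow> ('q, 'w) ctx \<Rightarrow> 'q fm \<Rightarrow> 'w \<Rightarrow> bool" where
  "CPLs R \<Gamma> A w = (THE P. \<forall>v. P v = cpls_at R P v) w \<Gamma> A"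

text \<open>Validity over all converse well-founded frames satisfying a frame condition K
  (K = (\<lambda>_. True) gives the Hilbert-style judgments; K = transp the transitive variant).\<close>
definition valid_CPL :: "(('w \<Rightarrow> 'w \<Rightarrow> bool) \<Rightarrow> bool) \<Rightarrow> 'q fm \<Rightarrow> bool" where
  "valid_CPL K A \<longleftrightarrow> (\<forall>R w \<Gamma>. cwf R \<and> K R \<and> finite \<Gamma> \<longrightarrow> CPL R \<Gamma> A w)"

definition valid_CPLs :: "(('w \<Rightarrow> 'w \<Rightarrow> bool) \<Rightarrow> bool) \<Rightarrow> 'q fm \<Rightarrow> bool" where
  "valid_CPLs K A \<longleftrightarrow> (\<forall>R w \<Gamma>. cwf R \<and> K R \<and> finite \<Gamma> \<longrightarrow> CPLs R \<Gamma> A w)"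

definition all_frames :: "('w \<Rightarrow> 'w \<Rightarrow> bool) \<Rightarrow> bool" where
  "all_frames R \<longleftrightarrow> True"

end

theory Submission
  imports Defs
begin

text \<open>Both relations are defined by well-founded recursion along strict reachability, so they
  satisfy their one-level rules as fixed-point equations and are therefore closed under the
  natural-deduction rules at a single world; the positive schemata follow from these rules alone.
  CPL* may moreover eliminate \<open>\<bottom>\<close> and \<open>\<diamond>\<close> at any reachable world, which yields \<open>\<not>\<diamond>\<bottom>\<close> and 4\<open>\<diamond>\<close>.
  The negative results live on the two-world frame \<open>0 \<prec> 1\<close>: a derivation at a world is sound
  for the classical reading in which \<open>\<box>A\<close> and \<open>\<diamond>A\<close> mean provability of \<open>A\<close> at the successors.
  At \<open>0\<close> this refutes \<open>\<not>\<diamond>\<bottom>\<close> under the hypothesis \<open>\<bottom>[1]\<close>, and it refutes the Fischer Servi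
  schema \<open>(\<diamond>A \<supset> \<box>B) \<supset> \<box>(A \<supset> B)\<close> for an atom \<open>A\<close> and \<open>B = \<bottom>\<close>, since neither \<open>A\<close> nor
  \<open>\<not>A\<close> is provable at the leaf \<open>1\<close>.\<close>

lemma rtranclp_neq_tranclp: "R\<^sup>*\<^sup>* w v \<Longrightarrow> v \<noteq> w \<Longrightarrow> R\<^sup>+\<^sup>+ w v"
  by (metis rtranclpD)

lemma wf_strictly_reachable:
  assumes "cwf R"
  shows "wf {(v, w). R\<^sup>+\<^sup>+ w v}"
proof -
  have "wfp R\<inverse>\<inverse>"
    using assms unfolding cwf_def wfp_def wf_iff_no_infinite_down_chain by simp
  then have "wfp (R\<inverse>\<inverse>)\<^sup>+\<^sup>+" by (rule wfp_tranclp)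
  then show ?thesis by (simp add: wfp_def tranclp_converse)
qed

lemma wf_fixpoint_unique:
  assumes "wf r" and "adm_wf r F"
  shows "\<exists>!P. \<forall>v. P v = F P v"
proof (rule ex1I)
  show "\<forall>v. wfrec r F v = F (wfrec r F) v"
    using wfrec_fixpoint[OF assms] by metis
  fix Q assume Q: "\<forall>v. Q v = F Q v"
  show "Q = wfrec r F"
  proof
    fix v show "Q v = wfrec r F v"
    proof (induction v rule: wf_induct_rule[OF \<open>wf r\<close>])
      case (1 v)
      then have "F Q v = F (wfrec r F) v"
        using \<open>adm_wf r F\<close> unfolding adm_wf_def by blast
      then show ?case using Q wfrec_fixpoint[OF assms] by metis
    qed
  qed
qed

lemma cpl_at_cong:
  assumes "\<And>v. R w v \<Longrightarrow> S v = S' v"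
  shows "cpl_at R S w = cpl_at R S' w"
proof (intro ext iffI)
  show "cpl_at R S' w \<Gamma> A" if "cpl_at R S w \<Gamma> A" for \<Gamma> A
    using that by (induction rule: cpl_at.induct) (use assms in \<open>auto intro: cpl_at.intros\<close>)
  show "cpl_at R S w \<Gamma> A" if "cpl_at R S' w \<Gamma> A" for \<Gamma> A
    using that by (induction rule: cpl_at.induct) (use assms in \<open>auto intro: cpl_at.intros\<close>)
qed

lemma cpls_at_cong:
  assumes "\<And>v. R\<^sup>+\<^sup>+ w v \<Longrightarrow> S v = S' v"
  shows "cpls_at R S w = cpls_at R S' w"
proof -
  note agree = assms rtranclp_neq_tranclp[of R w] rtranclp_into_tranclp1[of R w] tranclp.r_into_trancl[of R w]
  show ?thesis
  proof (intro ext iffI)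
    show "cpls_at R S' w \<Gamma> A" if "cpls_at R S w \<Gamma> A" for \<Gamma> A
      using that by (induction rule: cpls_at.induct) (use agree in \<open>auto intro: cpls_at.intros\<close>)
    show "cpls_at R S w \<Gamma> A" if "cpls_at R S' w \<Gamma> A" for \<Gamma> A
      using that by (induction rule: cpls_at.induct) (use agree in \<open>auto intro: cpls_at.intros\<close>)
  qed
qed

lemma cpl_at_dead_end_ctx:
  assumes "\<And>v. \<not> R w v"
  shows "cpl_at R S w \<Gamma> A \<Longrightarrow> \<forall>B. (B, w) \<in> \<Gamma> \<longrightarrow> (B, w) \<in> \<Gamma>' \<Longrightarrow> cpl_at R S w \<Gamma>' A"
proof (induction arbitrary: \<Gamma>' rule: cpl_at.induct)
  case (hyp A \<Gamma>)
  then show ?case by (blast intro: cpl_at.hyp)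
next
  case (botE \<Gamma> C)
  then show ?case by (metis cpl_at.botE)
next
  case (impI A \<Gamma> B)
  have "\<forall>C. (C, w) \<in> insert (A, w) \<Gamma> \<longrightarrow> (C, w) \<in> insert (A, w) \<Gamma>'"
    using impI.prems by auto
  then have "cpl_at R S w (insert (A, w) \<Gamma>') B" by (rule impI.IH)
  then show ?case by (rule cpl_at.impI)
next
  case (impE \<Gamma> A B)
  then show ?case by (metis cpl_at.impE)
next
  case (diaI w' \<Gamma> A)
  then show ?case using assms by blast
next
  case (boxI \<Gamma> A)
  show ?case using assms by (blast intro: cpl_at.boxI)
next
  case (diaE \<Gamma> A C)
  then have "cpl_at R S w \<Gamma>' (Dia A)" by blast
  then show ?case by (rule cpl_at.diaE) (use assms in blast)
next
  case (boxE \<Gamma> A C)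
  then show ?case using assms by blast
qed

lemma cpls_at_dead_end_ctx:
  assumes "\<And>v. \<not> R w v"
  shows "cpls_at R S w \<Gamma> A \<Longrightarrow> \<forall>B. (B, w) \<in> \<Gamma> \<longrightarrow> (B, w) \<in> \<Gamma>' \<Longrightarrow> cpls_at R S w \<Gamma>' A"
proof (induction arbitrary: \<Gamma>' rule: cpls_at.induct)
  case (hyp A \<Gamma>)
  then show ?case by (blast intro: cpls_at.hyp)
next
  case (botE v \<Gamma> C)
  have "v = w" using botE(1) assms by (metis converse_rtranclpE)
  with botE have "cpls_at R S w \<Gamma>' Bot" by blast
  then show ?case by (auto intro: cpls_at.botE[OF rtranclp.rtrancl_refl])
next
  case (impI A \<Gamma> B)
  have "\<forall>C. (C, w) \<in> insert (A, w) \<Gamma> \<longrightarrow> (C, w) \<in> insert (A, w) \<Gamma>'"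
    using impI.prems by auto
  then have "cpls_at R S w (insert (A, w) \<Gamma>') B" by (rule impI.IH)
  then show ?case by (rule cpls_at.impI)
next
  case (impE \<Gamma> A B)
  then show ?case by (metis cpls_at.impE)
next
  case (diaI w' \<Gamma> A)
  then show ?case using assms by blast
next
  case (boxI \<Gamma> A)
  show ?case using assms by (blast intro: cpls_at.boxI)
next
  case (diaE v \<Gamma> A C)
  have "v = w" using diaE(1) assms by (metis converse_rtranclpE)
  with diaE have "cpls_at R S w \<Gamma>' (Dia A)" by blast
  then show ?case using assms by (auto intro: cpls_at.diaE[OF rtranclp.rtrancl_refl])
next
  case (boxE v \<Gamma> A C)
  have "v = w" using boxE(1) assms by (metis converse_rtranclpE)
  with boxE show ?case using assms by blast
qed

fun holds :: "('w \<Rightarrow> 'w \<Rightarrow> bool) \<Rightarrow> ('w \<Rightarrow> ('q, 'w) ctx \<Rightarrow> 'q fm \<Rightarrow> bool) \<Rightarrow> ('q \<Rightarrow> bool)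
    \<Rightarrow> 'w \<Rightarrow> ('q, 'w) ctx \<Rightarrow> 'q fm \<Rightarrow> bool" where
  "holds R S V w \<Gamma> (Atom q) = V q"
| "holds R S V w \<Gamma> Bot = False"
| "holds R S V w \<Gamma> (Imp A B) = (holds R S V w \<Gamma> A \<longrightarrow> holds R S V w \<Gamma> B)"
| "holds R S V w \<Gamma> (Dia A) = (\<exists>w'. R w w' \<and> S w' \<Gamma> A)"
| "holds R S V w \<Gamma> (Box A) = (\<forall>w'. R w w' \<longrightarrow> S w' \<Gamma> A)"

lemma holds_insert:
  assumes "\<And>v \<Gamma>' B. R w v \<Longrightarrow> S v (insert (X, u) \<Gamma>') B = S v \<Gamma>' B"
  shows "holds R S V w (insert (X, u) \<Gamma>) A = holds R S V w \<Gamma> A"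
  using assms by (induction A) auto

lemma cpl_at_sound:
  assumes "\<And>v \<Gamma> X B. R w v \<Longrightarrow> S v (insert (X, w) \<Gamma>) B = S v \<Gamma> B"
  shows "cpl_at R S w \<Gamma> A \<Longrightarrow> \<forall>B. (B, w) \<in> \<Gamma> \<longrightarrow> holds R S V w \<Gamma> B \<Longrightarrow> holds R S V w \<Gamma> A"
proof (induction rule: cpl_at.induct)
  case (impI A \<Gamma> B)
  then show ?case using holds_insert[of R w S A w, OF assms] by auto
qed auto

lemma cpls_at_sound:
  assumes ctx_indep: "\<And>v \<Gamma> X B. R\<^sup>+\<^sup>+ w v \<Longrightarrow> S v (insert (X, w) \<Gamma>) B = S v \<Gamma> B"
  shows "cpls_at R S w \<Gamma> A \<Longrightarrow> \<forall>v B. R\<^sup>+\<^sup>+ w v \<longrightarrow> S v \<Gamma> B \<longrightarrow> holds R S V v \<Gamma> B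
    \<Longrightarrow> \<forall>B. (B, w) \<in> \<Gamma> \<longrightarrow> holds R S V w \<Gamma> B \<Longrightarrow> holds R S V w \<Gamma> A"
proof (induction rule: cpls_at.induct)
  case (impI A \<Gamma> B)
  have ins: "holds R S V v (insert (A, w) \<Gamma>) C = holds R S V v \<Gamma> C" if "R\<^sup>*\<^sup>* w v" for v C
    using that by (intro holds_insert ctx_indep) (rule rtranclp_into_tranclp1)
  show ?case
  proof (simp only: holds.simps, rule HOL.impI)
    assume "holds R S V w \<Gamma> A"
    with impI.prems have "holds R S V w (insert (A, w) \<Gamma>) B"
      by (intro impI.IH) (auto simp: ins ctx_indep tranclp_into_rtranclp)
    then show "holds R S V w \<Gamma> B" by (simp add: ins)
  qed
next
  case (botE v \<Gamma> C)
  then show ?case by (cases "v = w") (fastforce dest: rtranclp_neq_tranclp)+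
next
  case (diaE v \<Gamma> A C)
  then show ?case by (cases "v = w") (fastforce dest: rtranclp_neq_tranclp)+
next
  case (boxE v \<Gamma> A C)
  then show ?case by (cases "v = w") (fastforce dest: rtranclp_neq_tranclp)+
qed auto

text \<open>Families closed under the CPL rules with all eliminations at the current world;
  both CPL and CPL* are instances.\<close>

locale cpl_closed =
  fixes R :: "'w \<Rightarrow> 'w \<Rightarrow> bool" and P :: "('q, 'w) ctx \<Rightarrow> 'q fm \<Rightarrow> 'w \<Rightarrow> bool"
  assumes hyp: "(A, w) \<in> \<Gamma> \<Longrightarrow> P \<Gamma> A w"
    and botE: "P \<Gamma> Bot w \<Longrightarrow> P \<Gamma> C w"
    and impI: "P (insert (A, w) \<Gamma>) B w \<Longrightarrow> P \<Gamma> (Imp A B) w"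
    and impE: "P \<Gamma> (Imp A B) w \<Longrightarrow> P \<Gamma> A w \<Longrightarrow> P \<Gamma> B w"
    and diaI: "R w w' \<Longrightarrow> P \<Gamma> A w' \<Longrightarrow> P \<Gamma> (Dia A) w"
    and boxI: "(\<And>w'. R w w' \<Longrightarrow> P \<Gamma> A w') \<Longrightarrow> P \<Gamma> (Box A) w"
    and diaE: "P \<Gamma> (Dia A) w \<Longrightarrow> (\<And>w'. R w w' \<Longrightarrow> P \<Gamma> A w' \<Longrightarrow> P \<Gamma> C w) \<Longrightarrow> P \<Gamma> C w"
    and boxE: "P \<Gamma> (Box A) w \<Longrightarrow> ((\<And>w'. R w w' \<Longrightarrow> P \<Gamma> A w') \<Longrightarrow> P \<Gamma> C w) \<Longrightarrow> P \<Gamma> C w"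
begin

lemma imp_self: "P \<Gamma> (Imp A A) w"
  by (rule impI, rule hyp) simp

lemma imp_const: "P \<Gamma> (Imp A (Imp B A)) w"
  by (intro impI, rule hyp) simp

lemma imp_distrib: "P \<Gamma> (Imp (Imp A (Imp B C)) (Imp (Imp A B) (Imp A C))) w"
proof (intro impI)
  let ?\<Gamma> = "insert (A, w) (insert (Imp A B, w) (insert (Imp A (Imp B C), w) \<Gamma>))"
  have a: "P ?\<Gamma> A w" and ab: "P ?\<Gamma> (Imp A B) w" and abc: "P ?\<Gamma> (Imp A (Imp B C)) w"
    by (rule hyp, simp)+
  show "P ?\<Gamma> C w" by (rule impE[OF impE[OF abc a] impE[OF ab a]])
qed

lemma bot_imp: "P \<Gamma> (Imp Bot A) w"
  by (rule impI, rule botE, rule hyp) simp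

lemma box_K: "P \<Gamma> (Imp (Box (Imp A B)) (Imp (Box A) (Box B))) w"
proof (intro impI)
  let ?\<Gamma> = "insert (Box A, w) (insert (Box (Imp A B), w) \<Gamma>)"
  show "P ?\<Gamma> (Box B) w"
  proof (rule boxE[of ?\<Gamma> "Imp A B"])
    show "P ?\<Gamma> (Box (Imp A B)) w" by (rule hyp) simp
    assume AB: "P ?\<Gamma> (Imp A B) w'" if "R w w'" for w'
    show "P ?\<Gamma> (Box B) w"
    proof (rule boxE[of ?\<Gamma> A])
      show "P ?\<Gamma> (Box A) w" by (rule hyp) simp
      assume A: "P ?\<Gamma> A w'" if "R w w'" for w'
      show "P ?\<Gamma> (Box B) w"
      proof (rule boxI)
        fix w' assume "R w w'"
        then show "P ?\<Gamma> B w'" by (intro impE[OF AB A])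
      qed
    qed
  qed
qed

lemma dia_K: "P \<Gamma> (Imp (Box (Imp A B)) (Imp (Dia A) (Dia B))) w"
proof (intro impI)
  let ?\<Gamma> = "insert (Dia A, w) (insert (Box (Imp A B), w) \<Gamma>)"
  show "P ?\<Gamma> (Dia B) w"
  proof (rule boxE[of ?\<Gamma> "Imp A B"])
    show "P ?\<Gamma> (Box (Imp A B)) w" by (rule hyp) simp
    assume AB: "P ?\<Gamma> (Imp A B) w'" if "R w w'" for w'
    show "P ?\<Gamma> (Dia B) w"
    proof (rule diaE[of ?\<Gamma> A])
      show "P ?\<Gamma> (Dia A) w" by (rule hyp) simp
      fix w' assume "R w w'" and "P ?\<Gamma> A w'"
      then show "P ?\<Gamma> (Dia B) w" by (blast intro: diaI impE[OF AB])
    qed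
  qed
qed

lemma box_4:
  assumes "transp R"
  shows "P \<Gamma> (Imp (Box A) (Box (Box A))) w"
proof (rule impI)
  let ?\<Gamma> = "insert (Box A, w) \<Gamma>"
  show "P ?\<Gamma> (Box (Box A)) w"
  proof (rule boxE[of ?\<Gamma> A])
    show "P ?\<Gamma> (Box A) w" by (rule hyp) simp
    assume "P ?\<Gamma> A w'" if "R w w'" for w'
    with assms show "P ?\<Gamma> (Box (Box A)) w" by (blast intro: boxI dest: transpD)
  qed
qed

end

context
  fixes R :: "'w \<Rightarrow> 'w \<Rightarrow> bool"
  assumes cwf: "cwf R"
begin

lemma CPL_unfold: "CPL R \<Gamma> A w \<longleftrightarrow> cpl_at R (\<lambda>v \<Gamma> A. CPL R \<Gamma> A v) w \<Gamma> A"
proof -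
  have "adm_wf {(v, w). R\<^sup>+\<^sup>+ w v} (cpl_at R)"
    unfolding adm_wf_def by (auto intro!: cpl_at_cong)
  from theI'[OF wf_fixpoint_unique[OF wf_strictly_reachable[OF cwf] this]]
  show ?thesis unfolding CPL_def by metis
qed

lemma CPLs_unfold: "CPLs R \<Gamma> A w \<longleftrightarrow> cpls_at R (\<lambda>v \<Gamma> A. CPLs R \<Gamma> A v) w \<Gamma> A"
proof -
  have "adm_wf {(v, w). R\<^sup>+\<^sup>+ w v} (cpls_at R)"
    unfolding adm_wf_def by (auto intro!: cpls_at_cong)
  from theI'[OF wf_fixpoint_unique[OF wf_strictly_reachable[OF cwf] this]]
  show ?thesis unfolding CPLs_def by metis
qed

lemma CPL_cpl_closed: "cpl_closed R (CPL R)"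
proof (unfold_locales, goal_cases)
  case 1 show ?case by (rule CPL_unfold[THEN iffD2], rule cpl_at.hyp, fact)
next
  case 2 show ?case by (rule CPL_unfold[THEN iffD2], rule cpl_at.botE, rule CPL_unfold[THEN iffD1], fact)
next
  case 3 show ?case by (rule CPL_unfold[THEN iffD2], rule cpl_at.impI, rule CPL_unfold[THEN iffD1], fact)
next
  case 4 show ?case by (rule CPL_unfold[THEN iffD2], rule cpl_at.impE) (rule CPL_unfold[THEN iffD1], fact)+
next
  case 5 show ?case by (rule CPL_unfold[THEN iffD2], rule cpl_at.diaI) (use 5 in simp_all)
next
  case 6 show ?case by (rule CPL_unfold[THEN iffD2], rule cpl_at.boxI) (use 6 in simp)
next
  case 7 show ?case by (rule CPL_unfold[THEN iffD2], rule cpl_at.diaE) (use 7 CPL_unfold in blast)+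
next
  case 8 show ?case by (rule CPL_unfold[THEN iffD2], rule cpl_at.boxE) (use 8 CPL_unfold in blast)+
qed

lemma CPL_dead_end_insert:
  assumes "\<And>v. \<not> R w v" and "u \<noteq> w"
  shows "CPL R (insert (X, u) \<Gamma>) A w \<longleftrightarrow> CPL R \<Gamma> A w"
  using cpl_at_dead_end_ctx[of R w, OF assms(1)] assms(2) by (auto simp: CPL_unfold[of _ _ w])

lemma CPLs_botE_at:
  assumes "R\<^sup>*\<^sup>* w v" and "CPLs R \<Gamma> Bot v"
  shows "CPLs R \<Gamma> C w"
  by (rule CPLs_unfold[THEN iffD2], rule cpls_at.botE[OF assms(1)])
    (use assms(2) in \<open>auto dest: CPLs_unfold[THEN iffD1]\<close>)

lemma CPLs_diaE_at:
  assumes "R\<^sup>*\<^sup>* w v" and "CPLs R \<Gamma> (Dia A) v"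
    and "\<And>w'. R v w' \<Longrightarrow> CPLs R \<Gamma> A w' \<Longrightarrow> CPLs R \<Gamma> C w"
  shows "CPLs R \<Gamma> C w"
  by (rule CPLs_unfold[THEN iffD2], rule cpls_at.diaE[OF assms(1)])
    (use assms(2,3) in \<open>auto dest: CPLs_unfold[THEN iffD1]\<close>)

lemma CPLs_boxE_at:
  assumes "R\<^sup>*\<^sup>* w v" and "CPLs R \<Gamma> (Box A) v"
    and "(\<And>w'. R v w' \<Longrightarrow> CPLs R \<Gamma> A w') \<Longrightarrow> CPLs R \<Gamma> C w"
  shows "CPLs R \<Gamma> C w"
  by (rule CPLs_unfold[THEN iffD2], rule cpls_at.boxE[OF assms(1)])
    (use assms(2,3) in \<open>auto dest: CPLs_unfold[THEN iffD1]\<close>)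

lemma CPLs_cpl_closed: "cpl_closed R (CPLs R)"
proof (unfold_locales, goal_cases)
  case 1 show ?case by (rule CPLs_unfold[THEN iffD2], rule cpls_at.hyp, fact)
next
  case 2 show ?case by (rule CPLs_botE_at[OF rtranclp.rtrancl_refl], fact)
next
  case 3 show ?case by (rule CPLs_unfold[THEN iffD2], rule cpls_at.impI, rule CPLs_unfold[THEN iffD1], fact)
next
  case 4 show ?case by (rule CPLs_unfold[THEN iffD2], rule cpls_at.impE) (rule CPLs_unfold[THEN iffD1], fact)+
next
  case 5 show ?case by (rule CPLs_unfold[THEN iffD2], rule cpls_at.diaI) (use 5 in simp_all)
next
  case 6 show ?case by (rule CPLs_unfold[THEN iffD2], rule cpls_at.boxI) (use 6 in simp)
next
  case 7 show ?case by (rule CPLs_diaE_at[OF rtranclp.rtrancl_refl 7])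
next
  case 8 show ?case by (rule CPLs_boxE_at[OF rtranclp.rtrancl_refl 8])
qed

interpretation CPLs: cpl_closed R "CPLs R"
  by (rule CPLs_cpl_closed)

lemma CPLs_dead_end_insert:
  assumes "\<And>v. \<not> R w v" and "u \<noteq> w"
  shows "CPLs R (insert (X, u) \<Gamma>) A w \<longleftrightarrow> CPLs R \<Gamma> A w"
  using cpls_at_dead_end_ctx[of R w, OF assms(1)] assms(2) by (auto simp: CPLs_unfold[of _ _ w])

lemma CPLs_neg_dia_bot: "CPLs R \<Gamma> (Neg (Dia Bot)) w"
  unfolding Neg_def
proof (rule CPLs.impI)
  let ?\<Gamma> = "insert (Dia Bot, w) \<Gamma>"
  show "CPLs R ?\<Gamma> Bot w"
  proof (rule CPLs.diaE[of ?\<Gamma> Bot])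
    show "CPLs R ?\<Gamma> (Dia Bot) w" by (rule CPLs.hyp) simp
    fix w' assume "R w w'" and "CPLs R ?\<Gamma> Bot w'"
    then show "CPLs R ?\<Gamma> Bot w" by (blast intro: CPLs_botE_at)
  qed
qed

lemma CPLs_dia_4:
  assumes "transp R"
  shows "CPLs R \<Gamma> (Imp (Dia (Dia A)) (Dia A)) w"
proof (rule CPLs.impI)
  let ?\<Gamma> = "insert (Dia (Dia A), w) \<Gamma>"
  show "CPLs R ?\<Gamma> (Dia A) w"
  proof (rule CPLs.diaE[of ?\<Gamma> "Dia A"])
    show "CPLs R ?\<Gamma> (Dia (Dia A)) w" by (rule CPLs.hyp) simp
    fix w' assume "R w w'" and "CPLs R ?\<Gamma> (Dia A) w'"
    then show "CPLs R ?\<Gamma> (Dia A) w"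
      using assms by (blast intro: CPLs_diaE_at CPLs.diaI dest: transpD)
  qed
qed

end

definition single_edge :: "nat \<Rightarrow> nat \<Rightarrow> bool" where
  "single_edge v w \<longleftrightarrow> v = 0 \<and> w = 1"

lemma single_edge_from_root: "single_edge 0 v \<longleftrightarrow> v = 1"
  by (simp add: single_edge_def)

lemma single_edge_leaf: "\<not> single_edge 1 v"
  by (simp add: single_edge_def)

lemma tranclp_single_edge: "single_edge\<^sup>+\<^sup>+ w v \<longleftrightarrow> single_edge w v"
  by (metis rtranclp.cases single_edge_def tranclp.r_into_trancl tranclpD)

lemma cwf_single_edge: "cwf single_edge"
  unfolding cwf_def single_edge_def by (metis One_nat_def zero_neq_one)

lemma CPL_single_edge_insert:
  assumes "single_edge w v"
  shows "CPL single_edge (insert (X, w) \<Gamma>) A v \<longleftrightarrow> CPL single_edge \<Gamma> A v"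
proof -
  from assms have "w = 0" and "v = 1" by (simp_all add: single_edge_def)
  then show ?thesis
    using CPL_dead_end_insert[OF cwf_single_edge single_edge_leaf, of 0 X \<Gamma> A] by simp
qed

lemma CPLs_single_edge_insert:
  assumes "single_edge w v"
  shows "CPLs single_edge (insert (X, w) \<Gamma>) A v \<longleftrightarrow> CPLs single_edge \<Gamma> A v"
proof -
  from assms have "w = 0" and "v = 1" by (simp_all add: single_edge_def)
  then show ?thesis
    using CPLs_dead_end_insert[OF cwf_single_edge single_edge_leaf, of 0 X \<Gamma> A] by simp
qed

lemma CPL_single_edge_sound:
  fixes V :: "'q \<Rightarrow> bool"
  defines "S \<equiv> \<lambda>v \<Gamma> A. CPL single_edge \<Gamma> A v"
  assumes "CPL single_edge \<Gamma> A w" and "\<forall>B. (B, w) \<in> \<Gamma> \<longrightarrow> holds single_edge S V w \<Gamma> B"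
  shows "holds single_edge S V w \<Gamma> A"
  using cpl_at_sound[of single_edge w S] assms
  by (simp add: CPL_single_edge_insert CPL_unfold[OF cwf_single_edge, of _ _ w])

lemma CPLs_single_edge_sound:
  fixes V :: "'q \<Rightarrow> bool"
  defines "S \<equiv> \<lambda>v \<Gamma> A. CPLs single_edge \<Gamma> A v"
  assumes "CPLs single_edge \<Gamma> A w" and "\<forall>B u. (B, u) \<in> \<Gamma> \<longrightarrow> holds single_edge S V u \<Gamma> B"
  shows "holds single_edge S V w \<Gamma> A"
proof -
  have sound: "holds single_edge S V w \<Gamma> A"
    if "CPLs single_edge \<Gamma> A w" and "\<forall>v B. single_edge w v \<longrightarrow> S v \<Gamma> B \<longrightarrow> holds single_edge S V v \<Gamma> B"
    for w A
    using cpls_at_sound[of single_edge w S] that assms(3)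
    by (simp add: S_def tranclp_single_edge CPLs_single_edge_insert CPLs_unfold[OF cwf_single_edge, of _ _ w])
  have "holds single_edge S V v \<Gamma> B" if "single_edge w v" and "S v \<Gamma> B" for w v B
  proof -
    from \<open>single_edge w v\<close> have "v = 1" by (simp add: single_edge_def)
    with that(2) show ?thesis using sound single_edge_leaf by (simp add: S_def)
  qed
  with sound[OF assms(2)] show ?thesis by blast
qed

lemma not_CPL_neg_dia_bot: "\<not> CPL single_edge ({(Bot, 1)} :: ('q, nat) ctx) (Neg (Dia Bot)) 0"
proof
  let ?\<Gamma> = "{(Bot, 1)} :: ('q, nat) ctx"
  assume "CPL single_edge ?\<Gamma> (Neg (Dia Bot)) 0"
  then have "holds single_edge (\<lambda>v \<Gamma> A. CPL single_edge \<Gamma> A v) (\<lambda>_. False) 0 ?\<Gamma> (Neg (Dia Bot))"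
    by (rule CPL_single_edge_sound) simp
  moreover have "CPL single_edge ?\<Gamma> Bot 1"
    by (rule cpl_closed.hyp[OF CPL_cpl_closed[OF cwf_single_edge]]) simp
  ultimately show False by (simp add: Neg_def single_edge_from_root)
qed

lemma not_CPL_fischer_servi:
  "\<not> CPL single_edge {} (Imp (Imp (Dia (Atom q)) (Box Bot)) (Box (Imp (Atom q) Bot))) 0"
proof
  assume "CPL single_edge {} (Imp (Imp (Dia (Atom q)) (Box Bot)) (Box (Imp (Atom q) Bot))) 0"
  then have "holds single_edge (\<lambda>v \<Gamma> A. CPL single_edge \<Gamma> A v) (\<lambda>_. False) 0 {}
      (Imp (Imp (Dia (Atom q)) (Box Bot)) (Box (Imp (Atom q) Bot)))"
    by (rule CPL_single_edge_sound) simp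
  moreover have "\<not> CPL single_edge {} (Atom q) 1"
    using CPL_single_edge_sound[where V = "\<lambda>_. False" and \<Gamma> = "{}" and A = "Atom q" and w = 1] by auto
  moreover have "\<not> CPL single_edge {} (Imp (Atom q) Bot) 1"
    using CPL_single_edge_sound[where V = "\<lambda>_. True" and \<Gamma> = "{}" and A = "Imp (Atom q) Bot" and w = 1] by auto
  ultimately show False by (simp add: single_edge_from_root)
qed

lemma not_CPLs_fischer_servi:
  "\<not> CPLs single_edge {} (Imp (Imp (Dia (Atom q)) (Box Bot)) (Box (Imp (Atom q) Bot))) 0"
proof
  assume "CPLs single_edge {} (Imp (Imp (Dia (Atom q)) (Box Bot)) (Box (Imp (Atom q) Bot))) 0"
  then have "holds single_edge (\<lambda>v \<Gamma> A. CPLs single_edge \<Gamma> A v) (\<lambda>_. False) 0 {}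
      (Imp (Imp (Dia (Atom q)) (Box Bot)) (Box (Imp (Atom q) Bot)))"
    by (rule CPLs_single_edge_sound) simp
  moreover have "\<not> CPLs single_edge {} (Atom q) 1"
    using CPLs_single_edge_sound[where V = "\<lambda>_. False" and \<Gamma> = "{}" and A = "Atom q" and w = 1] by auto
  moreover have "\<not> CPLs single_edge {} (Imp (Atom q) Bot) 1"
    using CPLs_single_edge_sound[where V = "\<lambda>_. True" and \<Gamma> = "{}" and A = "Imp (Atom q) Bot" and w = 1] by auto
  ultimately show False by (simp add: single_edge_from_root)
qed

lemma valid_CPL_mp:
  assumes "valid_CPL K (Imp A B)" and "valid_CPL K A"
  shows "valid_CPL K B"
  using assms cpl_closed.impE[OF CPL_cpl_closed] unfolding valid_CPL_def by metis

lemma valid_CPLs_mp: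
  assumes "valid_CPLs K (Imp A B)" and "valid_CPLs K A"
  shows "valid_CPLs K B"
  using assms cpl_closed.impE[OF CPLs_cpl_closed] unfolding valid_CPLs_def by metis

lemma valid_CPL_nec:
  assumes "valid_CPL K A"
  shows "valid_CPL K (Box A)"
  using assms cpl_closed.boxI[OF CPL_cpl_closed] unfolding valid_CPL_def by metis

lemma valid_CPLs_nec:
  assumes "valid_CPLs K A"
  shows "valid_CPLs K (Box A)"
  using assms cpl_closed.boxI[OF CPLs_cpl_closed] unfolding valid_CPLs_def by metis

lemma valid_if_cpl_closed:
  fixes K :: "('w \<Rightarrow> 'w \<Rightarrow> bool) \<Rightarrow> bool" and A :: "'q fm"
  assumes "\<And>R (P :: ('q, 'w) ctx \<Rightarrow> 'q fm \<Rightarrow> 'w \<Rightarrow> bool) \<Gamma> w. cpl_closed R P \<Longrightarrow> K R \<Longrightarrow> P \<Gamma> A w"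
  shows "valid_CPL K A \<and> valid_CPLs K A"
  unfolding valid_CPL_def valid_CPLs_def
  using assms[OF CPL_cpl_closed] assms[OF CPLs_cpl_closed] by simp

theorem theorem6:
  fixes A B C :: "'q fm"
  shows
  \<comment> \<open>(MP)\<close>
  "(valid_CPL (all_frames :: ('w \<Rightarrow> 'w \<Rightarrow> bool) \<Rightarrow> bool) (Imp A B) \<and>
      valid_CPL (all_frames :: ('w \<Rightarrow> 'w \<Rightarrow> bool) \<Rightarrow> bool) A
      \<longrightarrow> valid_CPL (all_frames :: ('w \<Rightarrow> 'w \<Rightarrow> bool) \<Rightarrow> bool) B) \<and>
   (valid_CPLs (all_frames :: ('w \<Rightarrow> 'w \<Rightarrow> bool) \<Rightarrow> bool) (Imp A B) \<and>
      valid_CPLs (all_frames :: ('w \<Rightarrow> 'w \<Rightarrow> bool) \<Rightarrow> bool) A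
      \<longrightarrow> valid_CPLs (all_frames :: ('w \<Rightarrow> 'w \<Rightarrow> bool) \<Rightarrow> bool) B) \<and>
   \<comment> \<open>(I), (K), (S), (bot E)\<close>
   valid_CPL (all_frames :: ('w \<Rightarrow> 'w \<Rightarrow> bool) \<Rightarrow> bool) (Imp A A) \<and>
   valid_CPLs (all_frames :: ('w \<Rightarrow> 'w \<Rightarrow> bool) \<Rightarrow> bool) (Imp A A) \<and>
   valid_CPL (all_frames :: ('w \<Rightarrow> 'w \<Rightarrow> bool) \<Rightarrow> bool) (Imp A (Imp B A)) \<and>
   valid_CPLs (all_frames :: ('w \<Rightarrow> 'w \<Rightarrow> bool) \<Rightarrow> bool) (Imp A (Imp B A)) \<and>
   valid_CPL (all_frames :: ('w \<Rightarrow> 'w \<Rightarrow> bool) \<Rightarrow> bool)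
     (Imp (Imp A (Imp B C)) (Imp (Imp A B) (Imp A C))) \<and>
   valid_CPLs (all_frames :: ('w \<Rightarrow> 'w \<Rightarrow> bool) \<Rightarrow> bool)
     (Imp (Imp A (Imp B C)) (Imp (Imp A B) (Imp A C))) \<and>
   valid_CPL (all_frames :: ('w \<Rightarrow> 'w \<Rightarrow> bool) \<Rightarrow> bool) (Imp Bot A) \<and>
   valid_CPLs (all_frames :: ('w \<Rightarrow> 'w \<Rightarrow> bool) \<Rightarrow> bool) (Imp Bot A) \<and>
   \<comment> \<open>(NEC)\<close>
   (valid_CPL (all_frames :: ('w \<Rightarrow> 'w \<Rightarrow> bool) \<Rightarrow> bool) A
      \<longrightarrow> valid_CPL (all_frames :: ('w \<Rightarrow> 'w \<Rightarrow> bool) \<Rightarrow> bool) (Box A)) \<and>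
   (valid_CPLs (all_frames :: ('w \<Rightarrow> 'w \<Rightarrow> bool) \<Rightarrow> bool) A
      \<longrightarrow> valid_CPLs (all_frames :: ('w \<Rightarrow> 'w \<Rightarrow> bool) \<Rightarrow> bool) (Box A)) \<and>
   \<comment> \<open>(K box), (K dia)\<close>
   valid_CPL (all_frames :: ('w \<Rightarrow> 'w \<Rightarrow> bool) \<Rightarrow> bool)
     (Imp (Box (Imp A B)) (Imp (Box A) (Box B))) \<and>
   valid_CPLs (all_frames :: ('w \<Rightarrow> 'w \<Rightarrow> bool) \<Rightarrow> bool)
     (Imp (Box (Imp A B)) (Imp (Box A) (Box B))) \<and>
   valid_CPL (all_frames :: ('w \<Rightarrow> 'w \<Rightarrow> bool) \<Rightarrow> bool)
     (Imp (Box (Imp A B)) (Imp (Dia A) (Dia B))) \<and>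
   valid_CPLs (all_frames :: ('w \<Rightarrow> 'w \<Rightarrow> bool) \<Rightarrow> bool)
     (Imp (Box (Imp A B)) (Imp (Dia A) (Dia B))) \<and>
   \<comment> \<open>(4 box) over transitive frames\<close>
   valid_CPL (transp :: ('w \<Rightarrow> 'w \<Rightarrow> bool) \<Rightarrow> bool) (Imp (Box A) (Box (Box A))) \<and>
   valid_CPLs (transp :: ('w \<Rightarrow> 'w \<Rightarrow> bool) \<Rightarrow> bool) (Imp (Box A) (Box (Box A))) \<and>
   \<comment> \<open>(dia bot) in CPL*\<close>
   valid_CPLs (all_frames :: ('w \<Rightarrow> 'w \<Rightarrow> bool) \<Rightarrow> bool) (Neg (Dia Bot)) \<and>
   \<comment> \<open>(4 dia) in CPL* over transitive frames\<close>
   valid_CPLs (transp :: ('w \<Rightarrow> 'w \<Rightarrow> bool) \<Rightarrow> bool) (Imp (Dia (Dia A)) (Dia A)) \<and>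
   \<comment> \<open>not dia bot is not an axiom of CPL\<close>
   (\<exists>(R :: nat \<Rightarrow> nat \<Rightarrow> bool) w (\<Gamma> :: ('q, nat) ctx).
      cwf R \<and> finite \<Gamma> \<and> \<not> CPL R \<Gamma> (Neg (Dia Bot)) w) \<and>
   \<comment> \<open>(dia A implies box B) implies box (A implies B) is an axiom of neither\<close>
   (\<exists>(R :: nat \<Rightarrow> nat \<Rightarrow> bool) w (\<Gamma> :: ('q, nat) ctx) (A' :: 'q fm) B'.
      cwf R \<and> finite \<Gamma> \<and> \<not> CPL R \<Gamma> (Imp (Imp (Dia A') (Box B')) (Box (Imp A' B'))) w) \<and>
   (\<exists>(R :: nat \<Rightarrow> nat \<Rightarrow> bool) w (\<Gamma> :: ('q, nat) ctx) (A' :: 'q fm) B'.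
      cwf R \<and> finite \<Gamma> \<and> \<not> CPLs R \<Gamma> (Imp (Imp (Dia A') (Box B')) (Box (Imp A' B'))) w)"
proof -
  let ?K = "all_frames :: ('w \<Rightarrow> 'w \<Rightarrow> bool) \<Rightarrow> bool"
  let ?T = "transp :: ('w \<Rightarrow> 'w \<Rightarrow> bool) \<Rightarrow> bool"
  have "valid_CPL ?K (Imp A A) \<and> valid_CPLs ?K (Imp A A)"
    and "valid_CPL ?K (Imp A (Imp B A)) \<and> valid_CPLs ?K (Imp A (Imp B A))"
    and "valid_CPL ?K (Imp (Imp A (Imp B C)) (Imp (Imp A B) (Imp A C)))
      \<and> valid_CPLs ?K (Imp (Imp A (Imp B C)) (Imp (Imp A B) (Imp A C)))"
    and "valid_CPL ?K (Imp Bot A) \<and> valid_CPLs ?K (Imp Bot A)"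
    and "valid_CPL ?K (Imp (Box (Imp A B)) (Imp (Box A) (Box B)))
      \<and> valid_CPLs ?K (Imp (Box (Imp A B)) (Imp (Box A) (Box B)))"
    and "valid_CPL ?K (Imp (Box (Imp A B)) (Imp (Dia A) (Dia B)))
      \<and> valid_CPLs ?K (Imp (Box (Imp A B)) (Imp (Dia A) (Dia B)))"
    and "valid_CPL ?T (Imp (Box A) (Box (Box A))) \<and> valid_CPLs ?T (Imp (Box A) (Box (Box A)))"
    by (rule valid_if_cpl_closed, erule cpl_closed.imp_self cpl_closed.imp_const
        cpl_closed.imp_distrib cpl_closed.bot_imp cpl_closed.box_K cpl_closed.dia_K cpl_closed.box_4)+
  moreover have "valid_CPLs ?K (Neg (Dia Bot))" and "valid_CPLs ?T (Imp (Dia (Dia A)) (Dia A))"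
    by (auto simp: valid_CPLs_def CPLs_neg_dia_bot CPLs_dia_4)
  moreover have "\<exists>R w (\<Gamma> :: ('q, nat) ctx). cwf R \<and> finite \<Gamma> \<and> \<not> CPL R \<Gamma> (Neg (Dia Bot)) w"
    by (meson cwf_single_edge not_CPL_neg_dia_bot finite.emptyI finite.insertI)
  moreover have "\<exists>R w (\<Gamma> :: ('q, nat) ctx) (A' :: 'q fm) B'.
      cwf R \<and> finite \<Gamma> \<and> \<not> CPL R \<Gamma> (Imp (Imp (Dia A') (Box B')) (Box (Imp A' B'))) w"
    and "\<exists>R w (\<Gamma> :: ('q, nat) ctx) (A' :: 'q fm) B'.
      cwf R \<and> finite \<Gamma> \<and> \<not> CPLs R \<Gamma> (Imp (Imp (Dia A') (Box B')) (Box (Imp A' B'))) w"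
    by (meson cwf_single_edge not_CPL_fischer_servi not_CPLs_fischer_servi finite.emptyI)+
  ultimately show ?thesis
    using valid_CPL_mp valid_CPLs_mp valid_CPL_nec valid_CPLs_nec by blast
qed

end
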